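(* Let $\alpha,n\in\mathbb{Q}$ with $n\neq0$. The torsion subgroup of $E_{\alpha,-n^2}(\mathbb{Q})$, where $$E_{\alpha,-n^2}:\ y^2=x^3+\alpha x^2-n^2x,$$ is not isomorphic to $\mathbb{Z}/2\mathbb{Z}\times\mathbb{Z}/8\mathbb{Z}$. *)

theory Defs
  imports Complex_Main "HOL-Algebra.Elementary_Groups"
begin

text \<open>Rational points of the curve y^2 = x^3 + a x^2 + b x, with None the point at infinity.\<close>

definition on_curve :: "rat \<Rightarrow> rat \<Rightarrow> (rat \<times> rat) option \<Rightarrow> bool" where
  "on_curve a b P = (case P of None \<Rightarrow> True
      | Some (x, y) \<Rightarrow> y^2 = x^3 + a * x^2 + b * x)"

definition ec_add :: "rat \<Rightarrow> rat \<Rightarrow> (rat \<times> rat) option \<Rightarrow> (rat \<times> rat) option \<Rightarrow> (rat \<times> rat) option" where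
  "ec_add a b P Q = (case P of None \<Rightarrow> Q | Some (x1, y1) \<Rightarrow>
     (case Q of None \<Rightarrow> P | Some (x2, y2) \<Rightarrow>
       (if x1 = x2 \<and> y1 = - y2 then None
        else let l = (if x1 = x2 then (3 * x1^2 + 2 * a * x1 + b) / (2 * y1)
                      else (y2 - y1) / (x2 - x1));
                 x3 = l^2 - a - x1 - x2;
                 y3 = - (l * (x3 - x1) + y1)
             in Some (x3, y3))))"

definition ec_mul :: "rat \<Rightarrow> rat \<Rightarrow> nat \<Rightarrow> (rat \<times> rat) option \<Rightarrow> (rat \<times> rat) option" where
  "ec_mul a b m P = ((ec_add a b P) ^^ m) None"

definition ec_points :: "rat \<Rightarrow> rat \<Rightarrow> (rat \<times> rat) option set" where
  "ec_points a b = {P. on_curve a b P}"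

definition ec_torsion_points :: "rat \<Rightarrow> rat \<Rightarrow> (rat \<times> rat) option set" where
  "ec_torsion_points a b = {P \<in> ec_points a b. \<exists>m>0. ec_mul a b m P = None}"

definition ec_torsion_group :: "rat \<Rightarrow> rat \<Rightarrow> (rat \<times> rat) option monoid" where
  "ec_torsion_group a b = \<lparr>carrier = ec_torsion_points a b, mult = ec_add a b, one = None\<rparr>"

end

theory Submission
  imports Defs "HOL-Computational_Algebra.Nth_Powers"
begin

text \<open>
  If the torsion group were \<open>Z/2 \<times> Z/8\<close>, some rational point \<open>P\<close> would have \<open>R = 4P\<close> of order 2,
  i.e. \<open>R = (e, 0)\<close> with \<open>f(e) = 0\<close> for the cubic \<open>f(X) = X\<^sup>3 + \<alpha>X\<^sup>2 - n\<^sup>2X\<close>. For every root \<open>e'\<close>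
  of \<open>f\<close>, the duplication formula gives \<open>X(2S) - e' = (((X(S) - e')\<^sup>2 - f'(e')) / 2Y(S))\<^sup>2\<close>.
  Write \<open>Q = 2P = (x, y)\<close>. The root \<open>0\<close> and \<open>R = 2Q\<close> give \<open>e = s\<^sup>2\<close> with \<open>s = (x\<^sup>2 + n\<^sup>2)/2y \<noteq> 0\<close>;
  the root \<open>e\<close> and \<open>Q = 2P\<close> give \<open>x - e = t\<^sup>2\<close>; the root \<open>e\<close> and \<open>X(2Q) = e\<close> give
  \<open>(x - e)\<^sup>2 = f'(e) = e\<^sup>2 + n\<^sup>2\<close>. Hence \<open>t\<^sup>4 = s\<^sup>4 + n\<^sup>2\<close>, which Fermat's descent rules out.
  That \<open>2P\<close> and \<open>4P\<close> are again torsion points needs the partial associativity \<open>2P + X = P + (P + X)\<close>.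
\<close>

section \<open>Fermat's equation \<open>x\<^sup>4 - y\<^sup>4 = z\<^sup>2\<close>\<close>

lemma power2_mod_4: "(n::nat)^2 mod 4 = (if even n then 0 else 1)"
proof (cases "even n")
  case True
  then obtain k where "n = 2*k" by blast
  then show ?thesis by (simp add: power2_eq_square)
next
  case False
  then obtain k where "n = 2*k + 1" using oddE by blast
  then have "n^2 = 4*(k*k + k) + 1" by (simp add: power2_eq_square algebra_simps)
  then show ?thesis using False by simp
qed

lemma coprime_add_left_summand:
  fixes a b :: nat
  assumes "coprime (a + b) a"
  shows "coprime (a + b) b"
  using assms by (metis add.commute coprime_commute coprime_iff_gcd_eq_1 gcd_add1)

lemma coprime_mult_eq_power_nat:
  fixes A B c k :: nat
  assumes "coprime A B" "A * B = c^k" "c > 0"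
  obtains a b where "A = a^k" "B = b^k"
proof -
  have "A > 0" "B > 0" using assms(2,3) by (auto intro!: gr0I)
  moreover have "is_nth_power k (A * B)" using assms(2) by auto
  ultimately have "is_nth_power k A" "is_nth_power k B"
    using assms(1) is_nth_power_mult_coprime_natD by blast+
  then show thesis using that unfolding is_nth_power_def by blast
qed

lemma coprime_mult_eq_four_times_fourth_power:
  fixes A B k :: nat
  assumes "coprime A B" "A * B = 4 * k^4" "k > 0" "odd B"
  obtains r s where "A = 4 * r^4" "B = s^4" "r > 0"
proof -
  have "coprime (2*2) B" using assms(4) by (simp only: coprime_mult_left_iff) simp
  then have "coprime 4 B" by simp
  then have "4 dvd A" using assms(2) by (metis coprime_dvd_mult_left_iff dvd_triv_left)
  then obtain A' where A': "A = 4 * A'" by blast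
  have "coprime A' B" "A' * B = k^4" using assms(1,2) A' by simp_all
  then obtain r s where "A' = r^4" "B = s^4" using coprime_mult_eq_power_nat assms(3) by blast
  moreover have "r > 0" using \<open>A' * B = k^4\<close> \<open>A' = r^4\<close> assms(3) by (auto intro!: gr0I)
  ultimately show thesis using that A' by blast
qed

lemma coprime_odd_halves:
  fixes p q :: nat
  assumes "odd p" "odd q" "q < p" "coprime p q"
  obtains A B where "p = A + B" "A = B + q" "coprime A B" "p^2 = q^2 + 4*A*B"
proof -
  have "even (p - q)" using assms(1-3) by simp
  then obtain B where B: "p = q + 2*B"
    using assms(3) by (metis dvd_def le_add_diff_inverse less_imp_le)
  define A where "A = B + q"
  have "coprime A B"
  proof (rule coprimeI)
    fix d assume "d dvd A" "d dvd B"
    then have "d dvd p" "d dvd q" using B by (simp_all add: A_def dvd_add_right_iff)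
    then show "is_unit d" using assms(4) coprime_common_divisor by blast
  qed
  moreover have "p^2 = q^2 + 4*A*B" using B by (simp add: A_def power2_eq_square algebra_simps)
  ultimately show thesis by (intro that[of A B]) (auto simp: A_def B)
qed

lemma quartic_common_factor_descent:
  fixes x y z :: nat
  assumes eq: "x^4 = y^4 + z^2" and "y > 0" "z > 0" "\<not> coprime x y"
  obtains x' y' z' where "x' < x" "x'^4 = y'^4 + z'^2" "y' > 0" "z' > 0"
proof -
  define g where "g = gcd x y"
  have "g > 1" using assms(2,4) by (simp add: g_def coprime_iff_gcd_eq_1 nat_neq_iff)
  obtain x' y' where x': "x = g*x'" and y': "y = g*y'" unfolding g_def by (meson dvdE gcd_dvd1 gcd_dvd2)
  have "g^4 dvd z^2" using eq x' y' by (metis dvd_add_right_iff dvd_triv_left power_mult_distrib)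
  moreover have "(g^2)^2 dvd z^2 \<longleftrightarrow> g^2 dvd z" by (rule pow_divides_pow_iff) simp
  ultimately obtain z' where z': "z = g^2*z'" by (auto simp: power_mult[symmetric])
  have "g^4 * x'^4 = g^4 * (y'^4 + z'^2)" using eq x' y' z'
    by (simp add: power_mult_distrib algebra_simps power_mult[symmetric])
  then have "x'^4 = y'^4 + z'^2" using \<open>g > 1\<close> by simp
  moreover have "x' < x"
  proof -
    have "x > 0" using eq assms(2) by (auto intro!: gr0I)
    then show ?thesis using x' \<open>g > 1\<close> by (metis mult_0_right n_less_m_mult_n neq0_conv One_nat_def)
  qed
  moreover have "y' > 0" "z' > 0" using y' z' assms(2,3) by (auto intro!: gr0I)
  ultimately show thesis using that by blast
qed

lemma quartic_coprime_odd:
  fixes x y z :: nat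
  assumes eq: "x^4 = y^4 + z^2" and "coprime x y"
  shows "odd x"
proof
  assume "even x"
  then have "odd y" using assms(2) by auto
  have "x^4 mod 4 = 0" using \<open>even x\<close> power2_mod_4[of "x^2"] by (simp add: power_mult[symmetric])
  moreover have "y^4 mod 4 = 1" using \<open>odd y\<close> power2_mod_4[of "y^2"] by (simp add: power_mult[symmetric])
  moreover have "z^2 mod 4 = 0 \<or> z^2 mod 4 = 1" using power2_mod_4[of z] by simp
  ultimately show False using eq by presburger
qed

lemma quartic_odd_odd_descent:
  fixes x y z :: nat
  assumes eq: "x^4 = y^4 + z^2" and "z > 0" "coprime x y" "odd x" "odd y"
  obtains x' y' z' where "x' < x" "x'^4 = y'^4 + z'^2" "y' > 0" "z' > 0"
proof -
  have "(y^2)^2 < (x^2)^2" using eq assms(2) by (simp add: power_mult[symmetric])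
  then have "y^2 < x^2" by (rule power_less_imp_less_base) simp
  moreover have "coprime (x^2) (y^2)" using assms(3) by simp
  ultimately obtain A B where AB: "x^2 = A + B" "A = B + y^2" "coprime A B" "(x^2)^2 = (y^2)^2 + 4*A*B"
    using coprime_odd_halves[of "x^2" "y^2"] assms(4,5) by auto
  have z2: "z^2 = 4*A*B" using eq AB(4) by (simp add: power_mult[symmetric])
  then have "even (z^2)" by simp
  then have "even z" by simp
  then obtain w where w: "z = 2*w" by blast
  then have "A * B = w^2" "w > 0" using z2 assms(2) by (simp_all add: power_mult_distrib)
  then obtain a b where ab: "A = a^2" "B = b^2" using coprime_mult_eq_power_nat AB(3) by blast
  have "B > 0" using \<open>A * B = w^2\<close> \<open>w > 0\<close> by (auto intro!: gr0I)
  have "a^4 = A^2" by (simp add: ab power_mult[symmetric])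
  also have "\<dots> = B^2 + x^2*y^2" using AB(1,2) by (simp add: power2_eq_square algebra_simps)
  also have "\<dots> = b^4 + (x*y)^2" by (simp add: ab power_mult[symmetric] power_mult_distrib)
  finally have "a^4 = b^4 + (x*y)^2" .
  moreover have "a < x"
  proof -
    have "a^2 < x^2" using AB(1) ab \<open>B > 0\<close> by simp
    then show ?thesis by (rule power_less_imp_less_base) simp
  qed
  moreover have "b > 0" "x*y > 0" using ab \<open>B > 0\<close> assms(4,5) by (auto intro!: gr0I)
  ultimately show thesis using that by blast
qed

lemma odd_square_eq_four_fourth_plus_fourth_descent:
  fixes x r s :: nat
  assumes eq: "x^2 = 4*r^4 + s^4" and "r > 0" "coprime (4*r^4) (s^4)" "odd x"
  obtains M N where "M < x" "M^4 = N^4 + s^2" "N > 0" "s > 0"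
proof -
  have "odd s" using eq assms(4) by (metis even_add even_mult_iff even_numeral even_power zero_less_numeral)
  have "(s^2)^2 < x^2" using eq assms(2) by (simp add: power_mult[symmetric])
  then have "s^2 < x" by (rule power_less_imp_less_base) simp
  moreover have "coprime x (s^2)"
  proof -
    have "coprime (4*r^4 + s^4) (s^4)" using assms(3) by (metis coprime_iff_gcd_eq_1 gcd_add1)
    then show ?thesis unfolding eq[symmetric] by simp
  qed
  ultimately obtain A B where AB: "x = A + B" "A = B + s^2" "coprime A B" "x^2 = (s^2)^2 + 4*A*B"
    using coprime_odd_halves[of x "s^2"] assms(4) \<open>odd s\<close> by auto
  have "A * B = r^4" using eq AB(4) by (simp add: power_mult[symmetric])
  then obtain M N where MN: "A = M^4" "B = N^4" using coprime_mult_eq_power_nat AB(3) assms(2) by blast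
  have "B > 0" using \<open>A * B = r^4\<close> assms(2) by (auto intro!: gr0I)
  have "M \<le> M^4" using AB(1) MN \<open>B > 0\<close> by (cases "M = 0") (auto intro: self_le_power)
  then have "M < x" using AB(1) MN \<open>B > 0\<close> by linarith
  moreover have "M^4 = N^4 + s^2" using AB(2) MN by simp
  moreover have "N > 0" "s > 0" using MN \<open>B > 0\<close> \<open>odd s\<close> by (auto intro!: gr0I)
  ultimately show thesis using that by blast
qed

lemma quartic_odd_even_descent:
  fixes x y z :: nat
  assumes eq: "x^4 = y^4 + z^2" and "y > 0" "coprime x y" "odd x" "even y"
  obtains x' y' z' where "x' < x" "x'^4 = y'^4 + z'^2" "y' > 0" "z' > 0"
proof -
  have "odd z" using eq assms(4,5) by (metis even_add even_power zero_less_numeral)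
  have "z^2 < (x^2)^2" using eq assms(2) by (simp add: power_mult[symmetric])
  then have "z < x^2" by (rule power_less_imp_less_base) simp
  moreover have "coprime (x^2) z"
  proof -
    have "coprime (x^4) (y^4)" using assms(3) by simp
    then have "coprime (y^4 + z^2) (z^2)" unfolding eq by (rule coprime_add_left_summand)
    then show ?thesis unfolding eq[symmetric] by simp
  qed
  ultimately obtain A B where AB: "x^2 = A + B" "A = B + z" "coprime A B" "(x^2)^2 = z^2 + 4*A*B"
    using coprime_odd_halves[of "x^2" z] assms(4) \<open>odd z\<close> by auto
  obtain k where "y = 2*k" using assms(5) by blast
  then have "A * B = 4*k^4" "k > 0" using eq AB(4) assms(2) by (simp_all add: power_mult[symmetric] power_mult_distrib)
  obtain r s where rs: "x^2 = 4*r^4 + s^4" "coprime (4*r^4) (s^4)" "r > 0"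
  proof (cases "odd B")
    case True
    then obtain r s where "A = 4*r^4" "B = s^4" "r > 0"
      using coprime_mult_eq_four_times_fourth_power AB(3) \<open>A * B = 4*k^4\<close> \<open>k > 0\<close> by blast
    then show thesis using that AB(1,3) by simp
  next
    case False
    moreover have "odd (A + B)" using assms(4) unfolding AB(1)[symmetric] by simp
    ultimately have "odd A" by simp
    then obtain r s where "B = 4*r^4" "A = s^4" "r > 0"
      using coprime_mult_eq_four_times_fourth_power[of B A] AB(3) \<open>A * B = 4*k^4\<close> \<open>k > 0\<close>
      by (metis coprime_commute mult.commute)
    then show thesis using that[of r s] AB(1,3) by (simp add: coprime_commute add.commute)
  qed
  then obtain M N where "M < x" "M^4 = N^4 + s^2" "N > 0" "s > 0"
    using odd_square_eq_four_fourth_plus_fourth_descent assms(4) by blast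
  then show thesis using that by blast
qed

theorem fourth_power_diff_not_square_nat:
  fixes x y z :: nat
  assumes "x^4 = y^4 + z^2" "y > 0" "z > 0"
  shows False
  using assms
proof (induction x arbitrary: y z rule: less_induct)
  case (less x)
  obtain x' y' z' where "x' < x" "x'^4 = y'^4 + z'^2" "y' > 0" "z' > 0"
  proof (cases "coprime x y")
    case True
    then have "odd x" using quartic_coprime_odd less.prems(1) by blast
    then show thesis
      using that quartic_odd_odd_descent quartic_odd_even_descent less.prems True by blast
  qed (use that quartic_common_factor_descent less.prems in blast)
  then show False using less.IH by blast
qed

corollary fourth_power_diff_not_square_int:
  fixes x y z :: int
  assumes "x^4 = y^4 + z^2" "y \<noteq> 0" "z \<noteq> 0"
  shows False
proof -
  have "int (nat \<bar>x\<bar> ^ 4) = int (nat \<bar>y\<bar> ^ 4 + nat \<bar>z\<bar> ^ 2)"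
    using assms(1) by (simp add: power_even_abs_numeral)
  then have "nat \<bar>x\<bar> ^ 4 = nat \<bar>y\<bar> ^ 4 + nat \<bar>z\<bar> ^ 2" by (simp only: of_nat_eq_iff)
  then show False
    using fourth_power_diff_not_square_nat[of "nat \<bar>x\<bar>" "nat \<bar>y\<bar>" "nat \<bar>z\<bar>"] assms(2,3) by simp
qed

lemma rat_denominator_exists: "\<exists>d::int. d > 0 \<and> of_int d * (r::rat) \<in> \<int>"
proof -
  obtain p q where pq: "quotient_of r = (p, q)" by fastforce
  then have "q > 0" "r = of_int p / of_int q" using quotient_of_denom_pos quotient_of_div by blast+
  then show ?thesis by (intro exI[of _ q]) simp
qed

corollary fourth_power_diff_not_square_rat:
  fixes x y z :: rat
  assumes eq: "x^4 = y^4 + z^2" and "y \<noteq> 0" "z \<noteq> 0"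
  shows False
proof -
  obtain dx dy dz :: int where d: "dx > 0" "dy > 0" "dz > 0"
    "rat_of_int dx * x \<in> \<int>" "rat_of_int dy * y \<in> \<int>" "rat_of_int dz * z \<in> \<int>"
    using rat_denominator_exists by metis
  define d :: rat where "d = of_int (dx * dy * dz)"
  have "d * x = of_int (dy * dz) * (of_int dx * x)" "d * y = of_int (dx * dz) * (of_int dy * y)"
    "d * (d * z) = of_int (dx * dy * dx * dy * dz) * (of_int dz * z)"
    by (simp_all add: d_def algebra_simps)
  then have "d * x \<in> \<int>" "d * y \<in> \<int>" "d * (d * z) \<in> \<int>"
    using d(4-6) by (metis Ints_mult Ints_of_int)+
  then obtain X Y Z where XYZ: "d * x = of_int X" "d * y = of_int Y" "d * (d * z) = of_int Z"
    by (metis Ints_cases)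
  have "(d * x)^4 = (d * y)^4 + (d * (d * z))^2" using eq by algebra
  then have "X^4 = Y^4 + Z^2" unfolding XYZ by (metis of_int_add of_int_eq_iff of_int_power)
  moreover have "d \<noteq> 0" using d(1-3) by (simp add: d_def)
  then have "Y \<noteq> 0" "Z \<noteq> 0" using XYZ assms(2,3) by auto
  ultimately show False using fourth_power_diff_not_square_int by blast
qed

section \<open>The chord-and-tangent law\<close>

definition nonsingular :: "rat \<Rightarrow> rat \<Rightarrow> bool" where
  "nonsingular a b \<longleftrightarrow> b \<noteq> 0 \<and> a^2 \<noteq> 4*b"

definition ec_neg :: "(rat \<times> rat) option \<Rightarrow> (rat \<times> rat) option" where
  "ec_neg P = map_option (\<lambda>(x, y). (x, - y)) P"

lemma ec_neg_simps [simp]: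
  "ec_neg None = None" "ec_neg (Some (x, y)) = Some (x, - y)"
  by (simp_all add: ec_neg_def)

lemma ec_neg_ec_neg [simp]: "ec_neg (ec_neg P) = P"
  by (cases P) (auto simp: ec_neg_def)

lemma ec_add_None_left [simp]: "ec_add a b None Q = Q"
  by (simp add: ec_add_def)

lemma ec_add_None_right [simp]: "ec_add a b P None = P"
  by (cases P) (auto simp: ec_add_def)

lemma ec_add_ec_neg [simp]: "ec_add a b P (ec_neg P) = None"
  by (cases P) (auto simp: ec_neg_def ec_add_def)

lemma on_curve_simps [simp]:
  "on_curve a b None" "on_curve a b (Some (x, y)) \<longleftrightarrow> y^2 = x^3 + a*x^2 + b*x"
  by (simp_all add: on_curve_def)

lemma on_curve_ec_neg: "on_curve a b P \<Longrightarrow> on_curve a b (ec_neg P)"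
  by (cases P) (auto simp: on_curve_def)

lemma option_pair_cases: obtains "P = None" | x y where "P = Some (x, y)"
  by (cases P) auto

lemma ec_add_tangent:
  assumes "y \<noteq> 0" "2*y*L = 3*x^2 + 2*a*x + b" "x' = L^2 - a - 2*x" "y' = - (L*(x' - x) + y)"
  shows "ec_add a b (Some (x, y)) (Some (x, y)) = Some (x', y')"
proof -
  have "L = (3*x^2 + 2*a*x + b) / (2*y)" using assms(1,2) by (simp add: field_simps)
  then show ?thesis using assms by (simp add: ec_add_def Let_def)
qed

lemma ec_add_chord:
  assumes "x1 \<noteq> x2" "(x2 - x1)*L = y2 - y1" "x3 = L^2 - a - x1 - x2" "y3 = - (L*(x3 - x1) + y1)"
  shows "ec_add a b (Some (x1, y1)) (Some (x2, y2)) = Some (x3, y3)"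
proof -
  have "L = (y2 - y1) / (x2 - x1)" using assms(1,2) by (simp add: field_simps)
  then show ?thesis using assms by (simp add: ec_add_def Let_def)
qed

lemma nonsingular_no_double_root:
  assumes "nonsingular a b" "x^3 + a*x^2 + b*x = 0" "3*x^2 + 2*a*x + b = 0"
  shows False
proof -
  have "b * (a^2 - 4*b) = 0" using assms(2,3) by algebra
  then show False using assms(1) by (simp add: nonsingular_def)
qed

lemma ec_add_Some_cases:
  assumes "y1^2 = x1^3 + a*x1^2 + b*x1" "y2^2 = x2^3 + a*x2^2 + b*x2"
  obtains (opposite) "x1 = x2" "y1 = - y2" "ec_add a b (Some (x1, y1)) (Some (x2, y2)) = None"
  | (tangent) L where "x1 = x2" "y1 = y2" "y1 \<noteq> 0" "2*y1*L = 3*x1^2 + 2*a*x1 + b"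
      "ec_add a b (Some (x1, y1)) (Some (x2, y2)) = Some (L^2 - a - 2*x1, - (L*((L^2 - a - 2*x1) - x1) + y1))"
  | (chord) L where "x1 \<noteq> x2" "(x2 - x1)*L = y2 - y1"
      "ec_add a b (Some (x1, y1)) (Some (x2, y2)) = Some (L^2 - a - x1 - x2, - (L*((L^2 - a - x1 - x2) - x1) + y1))"
proof -
  consider "x1 = x2" "y1 = - y2" | "x1 = x2" "y1 = y2" "y1 \<noteq> 0" | "x1 \<noteq> x2"
    using assms power2_eq_iff by fastforce
  then show thesis
  proof cases
    case 1
    then show thesis using opposite by (simp add: ec_add_def)
  next
    case 2
    define L where "L = (3*x1^2 + 2*a*x1 + b) / (2*y1)"
    have "2*y1*L = 3*x1^2 + 2*a*x1 + b" using 2 by (simp add: L_def field_simps)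
    then show thesis using 2 by (intro tangent) (auto intro: ec_add_tangent)
  next
    case 3
    define L where "L = (y2 - y1) / (x2 - x1)"
    have "(x2 - x1)*L = y2 - y1" using 3 by (simp add: L_def field_simps)
    then show thesis using 3 by (intro chord) (auto intro: ec_add_chord)
  qed
qed

lemma on_curve_ec_add:
  assumes "on_curve a b P" "on_curve a b Q"
  shows "on_curve a b (ec_add a b P Q)"
proof (cases P rule: option_pair_cases)
  case (2 x1 y1)
  show ?thesis
  proof (cases Q rule: option_pair_cases)
    case (2 x2 y2)
    note PQ = \<open>P = Some (x1, y1)\<close> \<open>Q = Some (x2, y2)\<close>
    have c1: "y1^2 = x1^3 + a*x1^2 + b*x1" and c2: "y2^2 = x2^3 + a*x2^2 + b*x2"
      using assms PQ by simp_all
    from c1 c2 show ?thesis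
    proof (cases rule: ec_add_Some_cases)
      case opposite
      then show ?thesis by (simp add: PQ)
    next
      case (tangent L)
      have "(- (L*((L^2 - a - 2*x1) - x1) + y1))^2
          = (L^2 - a - 2*x1)^3 + a*(L^2 - a - 2*x1)^2 + b*(L^2 - a - 2*x1)"
        using c1 tangent(4) by algebra
      then show ?thesis using tangent(5) by (simp add: PQ)
    next
      case (chord L)
      obtain i where "(x2 - x1)*i = 1" using chord(1) by (metis right_inverse right_minus_eq)
      then have "(- (L*((L^2 - a - x1 - x2) - x1) + y1))^2
          = (L^2 - a - x1 - x2)^3 + a*(L^2 - a - x1 - x2)^2 + b*(L^2 - a - x1 - x2)"
        using c1 c2 chord(2) by algebra
      then show ?thesis using chord(3) by (simp add: PQ)
    qed
  qed (use assms in simp)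
qed (use assms in simp)

lemma ec_add_commute:
  assumes "on_curve a b P" "on_curve a b Q"
  shows "ec_add a b P Q = ec_add a b Q P"
proof (cases P rule: option_pair_cases)
  case (2 x1 y1)
  show ?thesis
  proof (cases Q rule: option_pair_cases)
    case (2 x2 y2)
    note PQ = \<open>P = Some (x1, y1)\<close> \<open>Q = Some (x2, y2)\<close>
    from assms[unfolded PQ on_curve_simps]
    have "ec_add a b (Some (x1, y1)) (Some (x2, y2)) = ec_add a b (Some (x2, y2)) (Some (x1, y1))"
    proof (cases rule: ec_add_Some_cases)
      case (chord L)
      have "(x1 - x2)*L = y1 - y2" using chord(2) by algebra
      then have "ec_add a b (Some (x2, y2)) (Some (x1, y1))
          = Some (L^2 - a - x2 - x1, - (L*((L^2 - a - x2 - x1) - x2) + y2))"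
        using chord(1) by (intro ec_add_chord) auto
      moreover have "L*((L^2 - a - x2 - x1) - x2) + y2 = L*((L^2 - a - x1 - x2) - x1) + y1"
        using chord(2) by algebra
      ultimately show ?thesis using chord(3) by (simp add: algebra_simps)
    qed (simp_all add: ec_add_def)
    then show ?thesis by (simp only: PQ)
  qed simp
qed simp

lemma ec_neg_ec_add:
  assumes "on_curve a b P" "on_curve a b Q"
  shows "ec_neg (ec_add a b P Q) = ec_add a b (ec_neg P) (ec_neg Q)"
proof (cases P rule: option_pair_cases)
  case (2 x1 y1)
  show ?thesis
  proof (cases Q rule: option_pair_cases)
    case (2 x2 y2)
    note PQ = \<open>P = Some (x1, y1)\<close> \<open>Q = Some (x2, y2)\<close>
    from assms[unfolded PQ on_curve_simps]
    have "ec_neg (ec_add a b (Some (x1, y1)) (Some (x2, y2)))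
        = ec_add a b (Some (x1, - y1)) (Some (x2, - y2))"
    proof (cases rule: ec_add_Some_cases)
      case opposite
      then show ?thesis by (simp add: ec_add_def)
    next
      case (tangent L)
      have "ec_add a b (Some (x1, - y1)) (Some (x1, - y1))
          = Some ((- L)^2 - a - 2*x1, - ((- L)*(((- L)^2 - a - 2*x1) - x1) + - y1))"
        by (rule ec_add_tangent[where L = "- L"]) (use tangent(3,4) in auto)
      then show ?thesis using tangent(1,2,5) by simp
    next
      case (chord L)
      have "ec_add a b (Some (x1, - y1)) (Some (x2, - y2))
          = Some ((- L)^2 - a - x1 - x2, - ((- L)*(((- L)^2 - a - x1 - x2) - x1) + - y1))"
        by (rule ec_add_chord[where L = "- L"]) (use chord(1,2) in \<open>auto simp: algebra_simps\<close>)
      then show ?thesis using chord(3) by simp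
    qed
    then show ?thesis by (simp add: PQ)
  qed simp
qed simp

lemma ec_add_neg_chord_third_point:
  assumes ns: "nonsingular a b" and c1: "v^2 = u^3 + a*u^2 + b*u" and c2: "z^2 = w^3 + a*w^2 + b*w"
    and "w \<noteq> u" and N: "(w - u)*N = z - v"
    and x3: "x3 = N^2 - a - u - w" and y3: "y3 = - (N*(x3 - u) + v)"
  shows "ec_add a b (Some (u, - v)) (Some (x3, y3)) = Some (w, z)"
proof (cases "x3 = u")
  case True
  obtain i where i: "(w - u)*i = 1" using \<open>w \<noteq> u\<close> by (metis right_inverse right_minus_eq)
  have e: "N^2 - a - u - w = u" using True x3 by simp
  have "v \<noteq> 0"
  proof
    assume "v = 0"
    then have "u^3 + a*u^2 + b*u = 0" "3*u^2 + 2*a*u + b = 0"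
      using c1 c2 N i e by algebra+
    then show False using nonsingular_no_double_root[OF ns] by blast
  qed
  then obtain j where j: "v*j = 1" by (metis right_inverse)
  have "2*(- v)*(- N) = 3*u^2 + 2*a*u + b" using c1 c2 N i e j by algebra
  then have "ec_add a b (Some (u, - v)) (Some (u, - v)) = Some (w, z)"
    using \<open>v \<noteq> 0\<close> e N by (intro ec_add_tangent[where L = "- N"]) (auto simp: algebra_simps)
  then show ?thesis using True y3 by simp
next
  case False
  then show ?thesis
    using N x3 y3 by (intro ec_add_chord[where L = "- N"]) (auto simp: algebra_simps)
qed

lemma ec_add_ec_neg_cancel:
  assumes ns: "nonsingular a b" and "on_curve a b P" "on_curve a b X"
  shows "ec_add a b (ec_neg P) (ec_add a b P X) = X"
proof (cases P rule: option_pair_cases)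
  case (2 u v)
  show ?thesis
  proof (cases X rule: option_pair_cases)
    case 1
    then show ?thesis using ec_add_commute[OF on_curve_ec_neg] assms(2) by fastforce
  next
    case (2 w z)
    note PX = \<open>P = Some (u, v)\<close> \<open>X = Some (w, z)\<close>
    have c1: "v^2 = u^3 + a*u^2 + b*u" and c2: "z^2 = w^3 + a*w^2 + b*w"
      using assms PX by simp_all
    from c1 c2 show ?thesis
    proof (cases rule: ec_add_Some_cases)
      case opposite
      then show ?thesis by (simp add: PX)
    next
      case (tangent L)
      define d1 where "d1 = L^2 - a - 2*u"
      have "ec_add a b (Some (u, - v)) (Some (d1, - (L*(d1 - u) + v))) = Some (u, v)"
      proof (cases "d1 = u")
        case True
        have "ec_add a b (Some (u, - v)) (Some (u, - v)) = Some (u, v)"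
          by (rule ec_add_tangent[where L = "- L"]) (use tangent(3,4) True in \<open>auto simp: d1_def\<close>)
        then show ?thesis using True by simp
      next
        case False
        then show ?thesis by (intro ec_add_chord[where L = "- L"]) (auto simp: d1_def algebra_simps)
      qed
      then show ?thesis using tangent(1,2,5) by (simp add: PX d1_def)
    next
      case (chord N)
      then show ?thesis using ec_add_neg_chord_third_point[OF ns c1 c2] by (simp add: PX)
    qed
  qed
qed simp

lemma ec_add_eq_same_x:
  assumes ns: "nonsingular a b" and P: "P = Some (u, v)" "on_curve a b P" and X: "on_curve a b X"
    and PX: "ec_add a b P X = Some (u, y)"
  shows "X = None \<or> X = ec_neg (ec_add a b P P)"
proof -
  have "on_curve a b (Some (u, y))" using on_curve_ec_add[OF P(2) X] PX by simp
  then have "y = v \<or> y = - v" using P by (metis on_curve_simps(2) power2_eq_iff)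
  moreover have "X = ec_add a b (ec_neg P) (Some (u, y))" using ec_add_ec_neg_cancel[OF ns P(2) X] PX by simp
  ultimately consider "X = ec_add a b (ec_neg P) P" | "X = ec_add a b (ec_neg P) (ec_neg P)"
    using P by auto
  then show ?thesis
  proof cases
    case 1
    then show ?thesis using ec_add_commute[OF on_curve_ec_neg] P(2) by fastforce
  next
    case 2
    then show ?thesis using ec_neg_ec_add[OF P(2) P(2)] by simp
  qed
qed

lemma ec_add_double_assoc_generic:
  assumes ns: "nonsingular a b" and c1: "v^2 = u^3 + a*u^2 + b*u" and "v \<noteq> 0"
    and c2: "z^2 = w^3 + a*w^2 + b*w" and "w \<noteq> u"
    and X_ne: "Some (w, z) \<noteq> ec_neg (ec_add a b (Some (u, v)) (Some (u, v)))"
  shows "ec_add a b (ec_add a b (Some (u, v)) (Some (u, v))) (Some (w, z))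
       = ec_add a b (Some (u, v)) (ec_add a b (Some (u, v)) (Some (w, z)))"
proof -
  define P where "P = Some (u, v)"
  obtain iv where iv: "v*iv = 1" using \<open>v \<noteq> 0\<close> by (metis right_inverse)
  obtain i2 where i2: "(w - u)*i2 = 1" using \<open>w \<noteq> u\<close> by (metis right_inverse right_minus_eq)
  define L where "L = (3*u^2 + 2*a*u + b) / (2*v)"
  have L: "2*v*L = 3*u^2 + 2*a*u + b" using \<open>v \<noteq> 0\<close> by (simp add: L_def field_simps)
  define d1 where "d1 = L^2 - a - 2*u"
  define d2 where "d2 = - (L*(d1 - u) + v)"
  have D: "ec_add a b P P = Some (d1, d2)"
    unfolding P_def using \<open>v \<noteq> 0\<close> L by (intro ec_add_tangent) (auto simp: d1_def d2_def)
  have cD: "d2^2 = d1^3 + a*d1^2 + b*d1"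
    using on_curve_ec_add[of a b P P] c1 D by (simp add: P_def)
  define N where "N = (z - v) / (w - u)"
  have N: "(w - u)*N = z - v" using \<open>w \<noteq> u\<close> by (simp add: N_def field_simps)
  define y1 where "y1 = N^2 - a - u - w"
  define y2 where "y2 = - (N*(y1 - u) + v)"
  have Y: "ec_add a b P (Some (w, z)) = Some (y1, y2)"
    unfolding P_def using \<open>w \<noteq> u\<close> N by (intro ec_add_chord) (auto simp: y1_def y2_def)
  have "y1 \<noteq> u"
  proof
    assume "y1 = u"
    then show False
      using ec_add_eq_same_x[OF ns P_def, of "Some (w, z)" y2] Y X_ne c1 c2 by (simp add: P_def)
  qed
  then obtain i3 where i3: "(y1 - u)*i3 = 1" by (metis right_inverse right_minus_eq)
  define R where "R = (y2 - v) / (y1 - u)"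
  have R: "(y1 - u)*R = y2 - v" using \<open>y1 \<noteq> u\<close> by (simp add: R_def field_simps)
  obtain M x3 where "ec_add a b (Some (d1, d2)) (Some (w, z)) = Some (x3, - (M*(x3 - d1) + d2))"
    and "x3 = R^2 - a - u - y1" "M*(x3 - d1) + d2 = R*(x3 - u) + v"
  proof (cases "w = d1")
    case True
    then have "z^2 = d2^2" using c2 cD by simp
    moreover have "z \<noteq> - d2" using True X_ne D by (auto simp: P_def)
    ultimately have "z = d2" "d2 \<noteq> 0" by (auto simp: power2_eq_iff)
    then obtain i1 where i1: "d2*i1 = 1" by (metis right_inverse)
    define M where "M = (3*d1^2 + 2*a*d1 + b) / (2*d2)"
    have M: "2*d2*M = 3*d1^2 + 2*a*d1 + b" using \<open>d2 \<noteq> 0\<close> by (simp add: M_def field_simps)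
    define x3 where "x3 = M^2 - a - 2*d1"
    have N': "(d1 - u)*N = d2 - v" "y1 = N^2 - a - u - d1" using N True \<open>z = d2\<close> by (simp_all add: y1_def)
    have i2': "(d1 - u)*i2 = 1" using i2 True by simp
    have eq1: "x3 = R^2 - a - u - y1"
      using c1 cD L d1_def d2_def N' y2_def M R iv i1 i2' i3 x3_def by algebra
    moreover have "M*(x3 - d1) + d2 = R*(x3 - u) + v"
      using c1 cD L d1_def d2_def N' y2_def M R iv i1 i2' i3 x3_def eq1 by algebra
    moreover have "ec_add a b (Some (d1, d2)) (Some (w, z)) = Some (x3, - (M*(x3 - d1) + d2))"
      unfolding True \<open>z = d2\<close> using \<open>d2 \<noteq> 0\<close> M by (intro ec_add_tangent) (auto simp: x3_def)
    ultimately show thesis using that by blast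
  next
    case False
    obtain i1 where i1: "(w - d1)*i1 = 1" using False by (metis right_inverse right_minus_eq)
    define M where "M = (z - d2) / (w - d1)"
    have M: "(w - d1)*M = z - d2" using False by (simp add: M_def field_simps)
    define x3 where "x3 = M^2 - a - d1 - w"
    have eq1: "x3 = R^2 - a - u - y1"
      using c1 c2 L d1_def d2_def N y1_def y2_def M R iv i1 i2 i3 x3_def by algebra
    moreover have "M*(x3 - d1) + d2 = R*(x3 - u) + v"
      using c1 c2 L d1_def d2_def N y1_def y2_def M R iv i1 i2 i3 x3_def eq1 by algebra
    moreover have "ec_add a b (Some (d1, d2)) (Some (w, z)) = Some (x3, - (M*(x3 - d1) + d2))"
      using False M by (intro ec_add_chord) (auto simp: x3_def)
    ultimately show thesis using that by blast
  qed
  moreover have "ec_add a b P (Some (y1, y2)) = Some (x3, - (R*(x3 - u) + v))"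
    unfolding P_def using \<open>y1 \<noteq> u\<close> R \<open>x3 = R^2 - a - u - y1\<close> by (intro ec_add_chord) auto
  ultimately show ?thesis using D Y by (simp add: P_def)
qed

lemma ec_add_double_assoc:
  assumes ns: "nonsingular a b" and P: "on_curve a b P" and X: "on_curve a b X"
  shows "ec_add a b (ec_add a b P P) X = ec_add a b P (ec_add a b P X)"
proof (cases P rule: option_pair_cases)
  case (2 u v)
  have PP: "on_curve a b (ec_add a b P P)" using on_curve_ec_add[OF P P] .
  have cancel: "ec_add a b (ec_neg P) (ec_add a b P Y) = Y" if "on_curve a b Y" for Y
    using ec_add_ec_neg_cancel[OF ns P that] .
  consider "v = 0" | "X = None" | "X = P" | "X = ec_neg P" | "X = ec_neg (ec_add a b P P)"
    | w z where "v \<noteq> 0" "X = Some (w, z)" "w \<noteq> u" "X \<noteq> ec_neg (ec_add a b P P)"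
    using X 2 P by (cases X rule: option_pair_cases) (auto, metis power2_eq_iff)
  then show ?thesis
  proof cases
    case 1
    then have "ec_neg P = P" "ec_add a b P P = None" using 2 by (simp_all add: ec_add_def)
    then show ?thesis using cancel[OF X] by simp
  next
    case 3
    then show ?thesis using ec_add_commute[OF PP P] by simp
  next
    case 4
    then show ?thesis using ec_add_commute[OF PP on_curve_ec_neg[OF P]] cancel[OF P] by simp
  next
    case 5
    have "ec_add a b P X = ec_neg (ec_add a b (ec_neg P) (ec_add a b P P))"
      using ec_neg_ec_add[OF on_curve_ec_neg[OF P] PP] 5 by simp
    then show ?thesis using 5 cancel[OF P] by simp
  next
    case 6
    then show ?thesis
      using ec_add_double_assoc_generic[OF ns _ \<open>v \<noteq> 0\<close> _ \<open>w \<noteq> u\<close>] P X 2 by simp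
  qed simp
qed simp

lemma ec_mul_0 [simp]: "ec_mul a b 0 P = None"
  by (simp add: ec_mul_def)

lemma ec_mul_Suc: "ec_mul a b (Suc m) P = ec_add a b P (ec_mul a b m P)"
  by (simp add: ec_mul_def)

lemma ec_mul_add: "ec_mul a b (k + m) P = (ec_add a b P ^^ k) (ec_mul a b m P)"
  by (simp add: ec_mul_def funpow_add)

lemma on_curve_ec_mul: "on_curve a b P \<Longrightarrow> on_curve a b (ec_mul a b m P)"
  by (induction m) (simp_all add: ec_mul_Suc on_curve_ec_add)

lemma ec_mul_double:
  assumes "nonsingular a b" "on_curve a b P"
  shows "ec_mul a b m (ec_add a b P P) = ec_mul a b (2*m) P"
proof (induction m)
  case (Suc m)
  then show ?case
    using ec_add_double_assoc[OF assms on_curve_ec_mul[OF assms(2)]] by (simp add: ec_mul_Suc)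
qed simp

lemma None_in_ec_torsion_points: "None \<in> ec_torsion_points a b"
  by (auto simp: ec_torsion_points_def ec_points_def ec_mul_def intro!: exI[of _ 1])

lemma ec_torsion_points_double:
  assumes "nonsingular a b" "P \<in> ec_torsion_points a b"
  shows "ec_add a b P P \<in> ec_torsion_points a b"
proof -
  obtain m where P: "on_curve a b P" "m > 0" "ec_mul a b m P = None"
    using assms(2) by (auto simp: ec_torsion_points_def ec_points_def)
  have "ec_mul a b m (ec_add a b P P) = (ec_add a b P ^^ m) (ec_mul a b m P)"
    using ec_mul_double[OF assms(1) P(1)] ec_mul_add[of a b m m P] by (simp add: mult_2)
  also have "\<dots> = None" using P(3) by (simp add: ec_mul_def)
  finally show ?thesis
    using P on_curve_ec_add[OF P(1) P(1)] by (auto simp: ec_torsion_points_def ec_points_def)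
qed

section \<open>Two-descent\<close>

lemma ec_double_x_sub_root:
  fixes a b u v x y e :: rat
  assumes "v^2 = u^3 + a*u^2 + b*u" "v \<noteq> 0" "e^3 + a*e^2 + b*e = 0"
    and "ec_add a b (Some (u, v)) (Some (u, v)) = Some (x, y)"
  shows "4*v^2*(x - e) = ((u - e)^2 - (3*e^2 + 2*a*e + b))^2"
proof -
  define L where "L = (3*u^2 + 2*a*u + b) / (2*v)"
  have L: "2*v*L = 3*u^2 + 2*a*u + b" using assms(2) by (simp add: L_def field_simps)
  have "x = L^2 - a - 2*u" using assms(2,4) L ec_add_tangent[OF assms(2) L refl refl] by simp
  then show ?thesis using assms(1,3) L by algebra
qed

lemma ec_double_x_sub_root_square:
  fixes a b u v x y e :: rat
  assumes "v^2 = u^3 + a*u^2 + b*u" "v \<noteq> 0" "e^3 + a*e^2 + b*e = 0"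
    and "ec_add a b (Some (u, v)) (Some (u, v)) = Some (x, y)"
  obtains t where "x - e = t^2"
proof
  show "x - e = (((u - e)^2 - (3*e^2 + 2*a*e + b)) / (2*v))^2"
    using ec_double_x_sub_root[OF assms] assms(2) by (simp add: field_simps power2_eq_square)
qed

lemma no_point_of_order_eight:
  fixes a n :: rat
  assumes "n \<noteq> 0" and b: "b = - (n^2)" and P: "on_curve a b P"
    and Q: "Q = ec_add a b P P" and R: "R = ec_add a b Q Q"
    and "R \<noteq> None" "ec_add a b R R = None"
  shows False
proof -
  obtain e r where Re: "R = Some (e, r)" using \<open>R \<noteq> None\<close> by (cases R rule: option_pair_cases) auto
  then have "r = 0" using \<open>ec_add a b R R = None\<close> by (simp add: ec_add_def Let_def split: if_splits)
  obtain x y where Qx: "Q = Some (x, y)" "y \<noteq> 0"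
    using \<open>R \<noteq> None\<close> R by (cases Q rule: option_pair_cases) (auto simp: ec_add_def split: if_splits)
  obtain u v where Pu: "P = Some (u, v)" "v \<noteq> 0"
    using Qx Q by (cases P rule: option_pair_cases) (auto simp: ec_add_def split: if_splits)
  have cP: "v^2 = u^3 + a*u^2 + b*u" using P Pu by simp
  have oQ: "on_curve a b Q" unfolding Q by (rule on_curve_ec_add[OF P P])
  then have cQ: "y^2 = x^3 + a*x^2 + b*x" using Qx by simp
  have "on_curve a b R" unfolding R by (rule on_curve_ec_add[OF oQ oQ])
  then have cR: "e^3 + a*e^2 + b*e = 0" using Re \<open>r = 0\<close> by simp
  have QQ: "ec_add a b (Some (x, y)) (Some (x, y)) = Some (e, 0)" using R Qx Re \<open>r = 0\<close> by simp
  define s where "s = (x^2 + n^2) / (2*y)"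
  have "4*y^2*(e - 0) = (x^2 + n^2)^2"
    using ec_double_x_sub_root[OF cQ \<open>y \<noteq> 0\<close> _ QQ, of 0] b by simp
  then have e: "e = s^2" using \<open>y \<noteq> 0\<close> by (simp add: s_def field_simps power2_eq_square)
  have "s \<noteq> 0" using \<open>y \<noteq> 0\<close> \<open>n \<noteq> 0\<close> by (simp add: s_def)
  have "e * (e^2 + a*e + b) = 0" using cR by (simp add: algebra_simps power2_eq_square power3_eq_cube)
  then have quad: "e^2 + a*e + b = 0" using e \<open>s \<noteq> 0\<close> by simp
  have "4*y^2*(e - e) = ((x - e)^2 - (3*e^2 + 2*a*e + b))^2"
    using ec_double_x_sub_root[OF cQ \<open>y \<noteq> 0\<close> cR QQ] .
  then have "(x - e)^2 = 3*e^2 + 2*a*e + b" by simp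
  also have "\<dots> = e^2 + n^2" using quad b by algebra
  finally have "(x - e)^2 = e^2 + n^2" .
  moreover obtain t where "x - e = t^2"
    using ec_double_x_sub_root_square[OF cP \<open>v \<noteq> 0\<close> cR] Q Qx Pu by metis
  ultimately have "t^4 = s^4 + n^2" using e by (simp add: power_mult[symmetric])
  then show False using fourth_power_diff_not_square_rat \<open>s \<noteq> 0\<close> \<open>n \<noteq> 0\<close> by blast
qed

lemma iso_Z2_Z8_element_of_order_eight:
  fixes G (structure)
  assumes iso: "\<phi> \<in> iso G (DirProd (integer_mod_group 2) (integer_mod_group 8))"
    and one: "\<one> \<in> carrier G" "\<one> \<otimes> \<one> = \<one>"
    and square_closed: "\<And>x. x \<in> carrier G \<Longrightarrow> x \<otimes> x \<in> carrier G"
    \<comment> \<open>\<open>G\<close> is not known to be a group, and \<open>\<phi> \<in> hom G _\<close> says nothing about products outside \<open>carrier G\<close>\<close>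
  obtains P where "P \<in> carrier G" "(P \<otimes> P) \<otimes> (P \<otimes> P) \<noteq> \<one>"
    "((P \<otimes> P) \<otimes> (P \<otimes> P)) \<otimes> ((P \<otimes> P) \<otimes> (P \<otimes> P)) = \<one>"
proof -
  let ?H = "DirProd (integer_mod_group 2) (integer_mod_group 8)"
  have mult_H: "(p1, p2) \<otimes>\<^bsub>?H\<^esub> (q1, q2) = ((p1 + q1) mod 2, (p2 + q2) mod 8)" for p1 p2 q1 q2
    by (simp add: DirProd_def)
  have hom: "\<phi> (x \<otimes> y) = \<phi> x \<otimes>\<^bsub>?H\<^esub> \<phi> y" if "x \<in> carrier G" "y \<in> carrier G" for x y
    using iso that by (simp add: iso_def hom_mult)
  have bij: "bij_betw \<phi> (carrier G) (carrier ?H)" using iso by (simp add: iso_def)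
  obtain c1 c2 where c: "\<phi> \<one> = (c1, c2)" by fastforce
  have "(c1, c2) \<in> carrier ?H" using bij one(1) c by (metis bij_betwE)
  then have "c1 \<in> {0..<2}" "c2 \<in> {0..<8}" by (simp_all add: carrier_integer_mod_group)
  moreover have "(c1, c2) = ((c1 + c1) mod 2, (c2 + c2) mod 8)"
    using hom[OF one(1) one(1)] one(2) c mult_H by simp
  ultimately have phi_one: "\<phi> \<one> = (0, 0)" using c by auto presburger+
  have "(0, 1) \<in> carrier ?H" by (simp add: carrier_integer_mod_group)
  then obtain P where P: "P \<in> carrier G" "\<phi> P = (0, 1)"
    using bij by (metis bij_betw_imp_surj_on imageE)
  have P2: "P \<otimes> P \<in> carrier G" "\<phi> (P \<otimes> P) = (0, 2)"
    using square_closed[OF P(1)] hom[OF P(1) P(1)] P(2) mult_H by simp_all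
  have P4: "(P \<otimes> P) \<otimes> (P \<otimes> P) \<in> carrier G" "\<phi> ((P \<otimes> P) \<otimes> (P \<otimes> P)) = (0, 4)"
    using square_closed[OF P2(1)] hom[OF P2(1) P2(1)] P2(2) mult_H by simp_all
  have "\<phi> (((P \<otimes> P) \<otimes> (P \<otimes> P)) \<otimes> ((P \<otimes> P) \<otimes> (P \<otimes> P))) = \<phi> \<one>"
    using hom[OF P4(1) P4(1)] P4(2) mult_H phi_one by simp
  then have "((P \<otimes> P) \<otimes> (P \<otimes> P)) \<otimes> ((P \<otimes> P) \<otimes> (P \<otimes> P)) = \<one>"
    using bij square_closed[OF P4(1)] one(1) by (metis bij_betw_def inj_onD)
  moreover have "(P \<otimes> P) \<otimes> (P \<otimes> P) \<noteq> \<one>" using P4(2) phi_one by auto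
  ultimately show thesis using that P(1) by blast
qed

theorem proposition7p8:
  fixes \<alpha> n :: rat
  assumes "n \<noteq> 0"
  shows "\<not> (ec_torsion_group \<alpha> (- (n^2)) \<cong> DirProd (integer_mod_group 2) (integer_mod_group 8))"
proof
  let ?b = "- (n^2)"
  define G where "G = ec_torsion_group \<alpha> ?b"
  have G: "carrier G = ec_torsion_points \<alpha> ?b" "\<one>\<^bsub>G\<^esub> = None" "\<And>x y. x \<otimes>\<^bsub>G\<^esub> y = ec_add \<alpha> ?b x y"
    by (simp_all add: G_def ec_torsion_group_def)
  assume "ec_torsion_group \<alpha> ?b \<cong> DirProd (integer_mod_group 2) (integer_mod_group 8)"
  then obtain \<phi> where \<phi>: "\<phi> \<in> iso G (DirProd (integer_mod_group 2) (integer_mod_group 8))"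
    unfolding is_iso_def G_def by blast
  have "0 \<le> \<alpha>^2" "4 * ?b < 0" using assms by simp_all
  then have "\<alpha>^2 \<noteq> 4 * ?b" by linarith
  then have ns: "nonsingular \<alpha> ?b" using assms by (simp add: nonsingular_def)
  obtain P where P: "P \<in> ec_torsion_points \<alpha> ?b"
    "ec_add \<alpha> ?b (ec_add \<alpha> ?b P P) (ec_add \<alpha> ?b P P) \<noteq> None"
    "ec_add \<alpha> ?b (ec_add \<alpha> ?b (ec_add \<alpha> ?b P P) (ec_add \<alpha> ?b P P))
       (ec_add \<alpha> ?b (ec_add \<alpha> ?b P P) (ec_add \<alpha> ?b P P)) = None"
    by (rule iso_Z2_Z8_element_of_order_eight[OF \<phi>, unfolded G])
      (simp_all add: None_in_ec_torsion_points ec_torsion_points_double[OF ns])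
  have "on_curve \<alpha> ?b P" using P(1) by (simp add: ec_torsion_points_def ec_points_def)
  from no_point_of_order_eight[OF assms refl this refl refl P(2,3)] show False .
qed

end
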